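(* Let $A\in\mathbb{R}^{n\times m}$, let $b\in\mathbb{R}^n$ be a nonzero vector in the span of the columns of $A$, and let $c, c'\in\mathbb{R}^m$ have strictly positive entries. For positive $s\in\mathbb{R}^m$ let $\mathcal{E}_s(b) = \min_{y\in\mathbb{R}^m:\, A y = b} \sum_{i=1}^m s_i y_i^2$, and write $1/c$ for the vector $(1/c_i)_i$. Let $\phi = (A\,\mathbf{D}(c)A^\top)^+ b$. Then \[ \frac{1}{\mathcal{E}_{1/c'}(b)} \geq \frac{1}{\mathcal{E}_{1/c}(b)} + \frac{1}{\mathcal{E}_{1/c}(b)^2} \cdot \sum_{i=1}^m c_i\, (A^\top \phi)_i^2 \left(1-\frac{c_i}{c'_i}\right). \]
   Context: For a vector $c$, $\mathbf{D}(c)$ is the diagonal matrix with diagonal $c$; $L^+$ denotes the Moore–Penrose pseudoinverse of a symmetric matrix $L$. *)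

theory Defs
  imports "HOL-Analysis.Analysis"
begin

definition diag_mat :: "real ^ 'm \<Rightarrow> real ^ 'm ^ 'm" where
  "diag_mat c = (\<chi> i j. if i = j then c $ i else 0)"

definition mp_pinv :: "real ^ 'n ^ 'm \<Rightarrow> real ^ 'm ^ 'n" where
  "mp_pinv L = (THE X. L ** X ** L = L \<and> X ** L ** X = X \<and>
      transpose (L ** X) = L ** X \<and> transpose (X ** L) = X ** L)"

text \<open>Energy E_s(b) = min over y with A y = b of sum_i s_i y_i^2
  (the minimum is attained when b is in the column span of A and s > 0).\<close>
definition energy :: "real ^ 'm ^ 'n \<Rightarrow> real ^ 'm \<Rightarrow> real ^ 'n \<Rightarrow> real" where
  "energy A s b = Inf {(\<Sum>i\<in>UNIV. s $ i * (y $ i)\<^sup>2) | y. A *v y = b}"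

end

theory Submission
  imports Defs
begin

text \<open>Write L = A D(c) A^T and g = A^T \<phi>. Since b lies in the range of L, the flow
  y = D(c) g satisfies A y = b, and by Thomson's principle it is the minimiser for the
  weights 1/c, so E_{1/c}(b) = G := \<Sum>i. c_i g_i^2. Using the same y as a competitor for
  the weights 1/c' gives E_{1/c'}(b) \<le> H := \<Sum>i. c_i^2 g_i^2 / c'_i, and the sum in the
  claim equals G - H. The inequality is then the convexity of t \<mapsto> 1/t: 1/H lies above
  the tangent line of 1/t at G.\<close>

definition penrose_inverse :: "real ^ 'n ^ 'm \<Rightarrow> real ^ 'm ^ 'n \<Rightarrow> bool" where
  "penrose_inverse L X \<longleftrightarrow> L ** X ** L = L \<and> X ** L ** X = X \<and>
      transpose (L ** X) = L ** X \<and> transpose (X ** L) = X ** L"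

lemma transpose_eq_self_if_self_adjoint:
  fixes M :: "real ^ 'n ^ 'n"
  assumes "\<And>x y. (M *v x) \<bullet> y = x \<bullet> (M *v y)"
  shows "transpose M = M"
  by (metis assms adjoint_matrix adjoint_unique matrix_eq)

lemma self_adjoint_if_transpose_eq_self:
  fixes M :: "real ^ 'n ^ 'n"
  assumes "transpose M = M"
  shows "(M *v x) \<bullet> y = x \<bullet> (M *v y)"
  by (metis assms dot_lmul_matrix transpose_matrix_vector)

lemma orthogonal_projection_exists:
  fixes V :: "'a::euclidean_space set"
  assumes "subspace V"
  obtains p where "linear p" and "\<And>x. p x \<in> V" and "\<And>v. v \<in> V \<Longrightarrow> p v = v"
    and "\<And>x v. v \<in> V \<Longrightarrow> (x - p x) \<bullet> v = 0" and "\<And>x y. p x \<bullet> y = x \<bullet> p y"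
proof -
  obtain B where "B \<subseteq> V" and orth: "pairwise orthogonal B" and unit: "\<And>x. x \<in> B \<Longrightarrow> norm x = 1"
    and "independent B" and span_B: "span B = V"
    using orthonormal_basis_subspace[OF assms] by blast
  have "finite B" using \<open>independent B\<close> by (simp add: independent_imp_finite)
  have inner_B: "u \<bullet> v = (if u = v then 1 else 0)" if "u \<in> B" "v \<in> B" for u v
    using orth unit that by (auto simp: orthogonal_def pairwise_def norm_eq_1)
  define p where "p x = (\<Sum>u\<in>B. (x \<bullet> u) *\<^sub>R u)" for x
  have "linear p" unfolding p_def
    by (rule linearI) (simp_all add: inner_add_left scaleR_add_left sum.distrib scale_sum_right)
  have in_V: "p x \<in> V" for x
    unfolding p_def span_B[symmetric] by (intro span_sum span_scale span_base)
  have "(x - p x) \<bullet> v = 0" if "v \<in> B" for x v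
  proof -
    have "p x \<bullet> v = (\<Sum>u\<in>B. (x \<bullet> u) * (u \<bullet> v))" unfolding p_def by (simp add: inner_sum_left)
    also have "\<dots> = (\<Sum>u\<in>B. if u = v then x \<bullet> v else 0)" by (rule sum.cong) (auto simp: inner_B that)
    also have "\<dots> = x \<bullet> v" using \<open>finite B\<close> that by simp
    finally show ?thesis by (simp add: inner_diff_left)
  qed
  then have orth_V: "(x - p x) \<bullet> v = 0" if "v \<in> V" for x v
    using orthogonal_to_span[of v B "x - p x"] that span_B by (auto simp: orthogonal_def)
  have "p v = v" if "v \<in> V" for v
  proof -
    have "v - p v \<in> V" using that in_V assms by (simp add: subspace_diff)
    then have "(v - p v) \<bullet> (v - p v) = 0" using orth_V by blast
    then show ?thesis by simp
  qed
  moreover have "p x \<bullet> y = x \<bullet> p y" for x y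
  proof -
    have "p x \<bullet> (y - p y) = 0" using orth_V[OF in_V] by (simp add: inner_commute)
    moreover have "(x - p x) \<bullet> p y = 0" using orth_V[OF in_V] .
    ultimately show ?thesis by (simp add: inner_diff_left inner_diff_right inner_commute)
  qed
  ultimately show thesis using that \<open>linear p\<close> in_V orth_V by blast
qed

lemma penrose_inverseI_projection:
  fixes L :: "real ^ 'n ^ 'm" and X :: "real ^ 'm ^ 'n"
  assumes "L ** X = P" "X ** L = Q" "P ** L = L" "Q ** X = X"
    and "transpose P = P" "transpose Q = Q"
  shows "penrose_inverse L X"
  using assms unfolding penrose_inverse_def by (metis matrix_mul_assoc)

lemma penrose_inverse_exists_symmetric:
  fixes L :: "real ^ 'n ^ 'n"
  assumes sym: "transpose L = L"
  obtains X where "penrose_inverse L X"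
proof -
  have adj: "(L *v x) \<bullet> y = x \<bullet> (L *v y)" for x y
    using self_adjoint_if_transpose_eq_self[OF sym] .
  define V where "V = range ((*v) L)"
  have "subspace V" unfolding V_def
    by (intro real_vector.linear_subspace_image subspace_UNIV matrix_vector_mul_linear)
  then obtain p where "linear p" and p_in_V: "\<And>x. p x \<in> V" and p_id: "\<And>v. v \<in> V \<Longrightarrow> p v = v"
    and p_orth: "\<And>x v. v \<in> V \<Longrightarrow> (x - p x) \<bullet> v = 0" and p_adj: "\<And>x y. p x \<bullet> y = x \<bullet> p y"
    using orthogonal_projection_exists by blast
  have span_V: "span V = V" using \<open>subspace V\<close> by (simp add: span_eq_iff)
  have ker: "L *v z = 0 \<longleftrightarrow> (\<forall>v\<in>V. z \<bullet> v = 0)" for z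
  proof
    assume "\<forall>v\<in>V. z \<bullet> v = 0"
    then have "(L *v z) \<bullet> (L *v z) = 0" unfolding adj[of z] V_def by blast
    then show "L *v z = 0" by simp
  qed (auto simp: V_def simp flip: adj)
  have L_p: "L *v p x = L *v x" for x
    using ker[of "x - p x"] p_orth by (simp add: matrix_vector_mult_diff_distrib)
  have "inj_on ((*v) L) (span V)"
  proof (rule inj_onI)
    fix x y assume "x \<in> span V" "y \<in> span V" and "L *v x = L *v y"
    then have "x - y \<in> V" and "\<forall>v\<in>V. (x - y) \<bullet> v = 0"
      using \<open>subspace V\<close> span_V ker[of "x - y"]
      by (simp_all add: subspace_diff matrix_vector_mult_diff_distrib)
    then show "x = y" by (metis eq_iff_diff_eq_0 inner_eq_zero_iff)
  qed
  then obtain h where h_in_V: "\<And>x. h x \<in> V" and "linear h" and h_L: "\<And>x. x \<in> V \<Longrightarrow> h (L *v x) = x"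
    using linear_inj_on_left_inverse[OF matrix_vector_mul_linear] span_V by (metis rangeI subsetD)
  define X where "X = matrix (h \<circ> p)"
  have X_apply: "X *v y = h (p y)" for y
    unfolding X_def using linear_compose[OF \<open>linear p\<close> \<open>linear h\<close>] by (simp add: matrix_works)
  have L_X: "L *v (X *v y) = p y" for y
  proof -
    obtain w where w: "p y = L *v w" using p_in_V V_def by blast
    then show ?thesis using X_apply h_L p_in_V L_p by metis
  qed
  have X_L: "X *v (L *v x) = p x" for x
    using X_apply p_id[of "L *v x"] L_p h_L p_in_V by (metis V_def rangeI)
  have P_sym: "transpose (matrix p) = matrix p"
    using \<open>linear p\<close> p_adj by (intro transpose_eq_self_if_self_adjoint) (simp add: matrix_works)
  show thesis
  proof (rule that, rule penrose_inverseI_projection)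
    show "L ** X = matrix p" "X ** L = matrix p"
      using L_X X_L \<open>linear p\<close> by (simp_all add: matrix_eq matrix_works flip: matrix_vector_mul_assoc)
    show "matrix p ** L = L"
      using \<open>linear p\<close> p_id by (simp add: matrix_eq matrix_works V_def flip: matrix_vector_mul_assoc)
    show "matrix p ** X = X"
      using \<open>linear p\<close> p_id h_in_V X_apply by (simp add: matrix_eq matrix_works flip: matrix_vector_mul_assoc)
  qed (rule P_sym)+
qed

lemma penrose_inverse_unique:
  assumes "penrose_inverse L X" and "penrose_inverse L Y"
  shows "X = Y"
proof -
  have X1: "L ** X ** L = L" and X2: "X ** L ** X = X"
    and X3: "transpose (L ** X) = L ** X" and X4: "transpose (X ** L) = X ** L"
    and Y1: "L ** Y ** L = L" and Y2: "Y ** L ** Y = Y"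
    and Y3: "transpose (L ** Y) = L ** Y" and Y4: "transpose (Y ** L) = Y ** L"
    using assms unfolding penrose_inverse_def by blast+
  have "X = X ** transpose (L ** X)" using X2 X3 by (simp add: matrix_mul_assoc)
  also have "\<dots> = X ** (transpose X ** transpose (L ** Y ** L))" using Y1 by (simp add: matrix_transpose_mul)
  also have "\<dots> = X ** transpose (L ** X) ** transpose (L ** Y)"
    by (simp add: matrix_transpose_mul matrix_mul_assoc)
  also have "\<dots> = X ** L ** Y" using X2 X3 Y3 by (simp add: matrix_mul_assoc)
  finally have X_eq: "X = X ** L ** Y" .
  have "Y = transpose (Y ** L) ** Y" using Y2 Y4 by simp
  also have "\<dots> = transpose (L ** X ** L) ** transpose Y ** Y" using X1 by (simp add: matrix_transpose_mul matrix_mul_assoc)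
  also have "\<dots> = transpose (X ** L) ** transpose (Y ** L) ** Y"
    by (simp add: matrix_transpose_mul matrix_mul_assoc)
  also have "\<dots> = X ** L ** (Y ** L ** Y)" using X4 Y4 by (simp add: matrix_mul_assoc)
  also have "\<dots> = X ** L ** Y" using Y2 by simp
  finally show ?thesis using X_eq by simp
qed

lemma penrose_inverse_mp_pinv:
  fixes L :: "real ^ 'n ^ 'n"
  assumes "transpose L = L"
  shows "penrose_inverse L (mp_pinv L)"
proof -
  obtain X where "penrose_inverse L X"
    using assms by (rule penrose_inverse_exists_symmetric)
  moreover have "mp_pinv L = X"
    using calculation penrose_inverse_unique
    unfolding mp_pinv_def penrose_inverse_def[symmetric] by blast
  ultimately show ?thesis by simp
qed

lemma diag_mat_mult_vector: "diag_mat c *v u = (\<chi> i. c $ i * u $ i)"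
proof -
  have "(if i = j then c $ i else 0) * u $ j = (if i = j then c $ i * u $ j else 0)" for i j :: 'a
    by simp
  then show ?thesis by (simp add: diag_mat_def matrix_vector_mult_def vec_eq_iff)
qed

lemma transpose_diag_mat: "transpose (diag_mat c) = diag_mat c"
  by (simp add: diag_mat_def transpose_def vec_eq_iff)

lemma transpose_weighted_gram:
  "transpose (A ** diag_mat c ** transpose A) = A ** diag_mat c ** transpose A"
  by (simp add: matrix_transpose_mul transpose_diag_mat matrix_mul_assoc)

lemma weighted_gram_quadratic_form:
  fixes A :: "real ^ 'm ^ 'n"
  shows "z \<bullet> ((A ** diag_mat c ** transpose A) *v z) = (\<Sum>i\<in>UNIV. c $ i * ((transpose A *v z) $ i)\<^sup>2)"
proof -
  have "z \<bullet> (A *v w) = (transpose A *v z) \<bullet> w" for w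
    by (simp add: dot_lmul_matrix)
  then show ?thesis
    by (simp add: diag_mat_mult_vector inner_vec_def power2_eq_square mult_ac
        flip: matrix_vector_mul_assoc)
qed

lemma weighted_sum_squares_eq_0_iff:
  fixes c x :: "real ^ 'm"
  assumes "\<And>i. c $ i > 0"
  shows "(\<Sum>i\<in>UNIV. c $ i * (x $ i)\<^sup>2) = 0 \<longleftrightarrow> x = 0"
proof -
  have "(\<Sum>i\<in>UNIV. c $ i * (x $ i)\<^sup>2) = 0 \<longleftrightarrow> (\<forall>i. c $ i * (x $ i)\<^sup>2 = 0)"
  proof -
    have "\<forall>i\<in>UNIV. 0 \<le> c $ i * (x $ i)\<^sup>2" using assms by (simp add: less_imp_le)
    then show ?thesis by (simp add: sum_nonneg_eq_0_iff)
  qed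
  also have "\<dots> \<longleftrightarrow> x = 0"
    using assms by (auto simp: vec_eq_iff) (metis less_irrefl)
  finally show ?thesis .
qed

lemma in_span_columns_imp_in_range:
  fixes A :: "real ^ 'm ^ 'n"
  assumes "b \<in> span (columns A)"
  obtains z where "b = A *v z"
proof -
  have "span (columns A) \<subseteq> range ((*v) A)"
  proof (rule span_minimal)
    show "columns A \<subseteq> range ((*v) A)"
      unfolding columns_def by (auto simp flip: matrix_vector_mult_basis)
    show "subspace (range ((*v) A))"
      by (intro real_vector.linear_subspace_image subspace_UNIV matrix_vector_mul_linear)
  qed
  then show thesis using assms that by blast
qed

text \<open>The residual r = b - L L^+ b is orthogonal to the range of L; hence r^T L r = 0,
  so A^T r = 0, so r is orthogonal to b \<in> range A as well, and therefore r = 0.\<close>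
lemma weighted_gram_pinv_solves:
  fixes A :: "real ^ 'm ^ 'n"
  assumes "\<And>i. c $ i > 0" and "b \<in> span (columns A)"
  defines "L \<equiv> A ** diag_mat c ** transpose A"
  shows "L *v (mp_pinv L *v b) = b"
proof -
  obtain z where z: "b = A *v z" using assms(2) by (rule in_span_columns_imp_in_range)
  define X where "X = mp_pinv L"
  have "penrose_inverse L X"
    unfolding X_def L_def by (intro penrose_inverse_mp_pinv transpose_weighted_gram)
  then have LXL: "L ** X ** L = L" and LX_sym: "transpose (L ** X) = L ** X"
    unfolding penrose_inverse_def by blast+
  define r where "r = b - L *v (X *v b)"
  have r_orth: "r \<bullet> (L *v w) = 0" for w
  proof -
    have "((L ** X) *v b) \<bullet> (L *v w) = b \<bullet> ((L ** X) *v (L *v w))"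
      using self_adjoint_if_transpose_eq_self[OF LX_sym] .
    also have "\<dots> = b \<bullet> (L *v w)" using LXL by (simp add: matrix_vector_mul_assoc)
    finally show ?thesis unfolding r_def by (simp add: inner_diff_left matrix_vector_mul_assoc)
  qed
  have "transpose A *v r = 0"
    using r_orth[of r] weighted_gram_quadratic_form[of r A c] weighted_sum_squares_eq_0_iff[OF assms(1)]
    unfolding L_def by simp
  then have "r \<bullet> b = 0" unfolding z by (metis dot_lmul_matrix transpose_matrix_vector inner_zero_left)
  then have "r \<bullet> r = 0" using r_orth by (simp add: r_def inner_diff_right)
  then show ?thesis unfolding r_def X_def by simp
qed

lemma potential_flow_weighted_gram_pinv:
  fixes A :: "real ^ 'm ^ 'n"
  assumes "\<And>i. c $ i > 0" and "b \<in> span (columns A)"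
  shows "A *v (diag_mat c *v (transpose A *v (mp_pinv (A ** diag_mat c ** transpose A) *v b))) = b"
  using weighted_gram_pinv_solves[OF assms] by (simp only: matrix_vector_mul_assoc matrix_mul_assoc)

lemma energy_le:
  fixes A :: "real ^ 'm ^ 'n"
  assumes "\<And>i. s $ i \<ge> 0" and "A *v y = b"
  shows "energy A s b \<le> (\<Sum>i\<in>UNIV. s $ i * (y $ i)\<^sup>2)"
  unfolding energy_def using assms
  by (intro cInf_lower bdd_belowI[of _ 0]) (auto intro!: sum_nonneg)

text \<open>For any y with A y = b, the cross term \<Sum>i. g_i y_i equals
  \<phi> \<bullet> b and so does not depend on y; completing the square in each y_i then shows
  that y_i = c_i g_i is optimal.\<close>
lemma energy_eq_potential_flow:
  fixes A :: "real ^ 'm ^ 'n"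
  assumes c_pos: "\<And>i. c $ i > 0" and flow: "A *v (diag_mat c *v (transpose A *v \<phi>)) = b"
  shows "energy A (\<chi> i. 1 / c $ i) b = (\<Sum>i\<in>UNIV. c $ i * ((transpose A *v \<phi>) $ i)\<^sup>2)"
proof -
  define g where "g = transpose A *v \<phi>"
  define G where "G = (\<Sum>i\<in>UNIV. c $ i * (g $ i)\<^sup>2)"
  have cross: "(\<Sum>i\<in>UNIV. g $ i * y $ i) = \<phi> \<bullet> b" if "A *v y = b" for y
    using that dot_lmul_matrix[of \<phi> A y] by (simp add: g_def inner_vec_def transpose_matrix_vector)
  show ?thesis
    unfolding energy_def G_def[symmetric] g_def[symmetric]
  proof (rule cInf_eq_minimum)
    show "G \<in> {\<Sum>i\<in>UNIV. (\<chi> i. 1 / c $ i) $ i * (y $ i)\<^sup>2 |y. A *v y = b}"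
      using flow c_pos
      by (auto simp: G_def g_def diag_mat_mult_vector power2_eq_square less_imp_neq[symmetric]
          intro!: exI[of _ "diag_mat c *v g"] sum.cong)
    fix x assume "x \<in> {\<Sum>i\<in>UNIV. (\<chi> i. 1 / c $ i) $ i * (y $ i)\<^sup>2 |y. A *v y = b}"
    then obtain y where y: "A *v y = b" and x: "x = (\<Sum>i\<in>UNIV. 1 / c $ i * (y $ i)\<^sup>2)"
      by auto
    have square: "1 / c $ i * (y $ i)\<^sup>2
        = 1 / c $ i * (y $ i - c $ i * g $ i)\<^sup>2 + 2 * (g $ i * y $ i) - c $ i * (g $ i)\<^sup>2" for i
      using c_pos[of i] by (simp add: field_simps power2_eq_square less_imp_neq[symmetric])
    have "0 \<le> (\<Sum>i\<in>UNIV. 1 / c $ i * (y $ i - c $ i * g $ i)\<^sup>2)"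
      using c_pos by (intro sum_nonneg) (simp add: less_imp_le)
    moreover have "x = (\<Sum>i\<in>UNIV. 1 / c $ i * (y $ i - c $ i * g $ i)\<^sup>2)
        + 2 * (\<Sum>i\<in>UNIV. g $ i * y $ i) - G"
      unfolding x G_def by (subst square) (simp add: sum.distrib sum_subtractf sum_distrib_left)
    moreover have "(\<Sum>i\<in>UNIV. g $ i * y $ i) = G"
      using cross[OF y] cross[OF flow[folded g_def]]
      by (simp add: G_def diag_mat_mult_vector power2_eq_square mult_ac)
    ultimately show "G \<le> x" by simp
  qed
qed

lemma energy_pos:
  fixes A :: "real ^ 'm ^ 'n"
  assumes c_pos: "\<And>i. c $ i > 0" and b_span: "b \<in> span (columns A)" and "b \<noteq> 0"
  shows "energy A (\<chi> i. 1 / c $ i) b > 0"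
proof -
  define g where "g = transpose A *v (mp_pinv (A ** diag_mat c ** transpose A) *v b)"
  have flow: "A *v (diag_mat c *v g) = b"
    unfolding g_def using c_pos b_span by (rule potential_flow_weighted_gram_pinv)
  have energy: "energy A (\<chi> i. 1 / c $ i) b = (\<Sum>i\<in>UNIV. c $ i * (g $ i)\<^sup>2)"
    using c_pos flow unfolding g_def by (rule energy_eq_potential_flow)
  have "g \<noteq> 0" using flow \<open>b \<noteq> 0\<close> by (metis matrix_vector_mult_0_right)
  then have "(\<Sum>i\<in>UNIV. c $ i * (g $ i)\<^sup>2) \<noteq> 0"
    using weighted_sum_squares_eq_0_iff[OF c_pos] by blast
  moreover have "(\<Sum>i\<in>UNIV. c $ i * (g $ i)\<^sup>2) \<ge> 0"
    using c_pos by (intro sum_nonneg) (simp add: less_imp_le)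
  ultimately show ?thesis unfolding energy by linarith
qed

lemma inverse_ge_tangent_line:
  fixes g h :: real
  assumes "0 < g" and "0 < h"
  shows "1 / g + 1 / g\<^sup>2 * (g - h) \<le> 1 / h"
proof -
  have "1 / h - (1 / g + 1 / g\<^sup>2 * (g - h)) = (g - h)\<^sup>2 / (h * g\<^sup>2)"
    using assms by (simp add: field_simps power2_eq_square)
  moreover have "(g - h)\<^sup>2 / (h * g\<^sup>2) \<ge> 0" using assms by simp
  ultimately show ?thesis by linarith
qed

theorem lemma4p4:
  fixes A :: "real ^ 'm ^ 'n" and b :: "real ^ 'n" and c c' :: "real ^ 'm"
  assumes "b \<noteq> 0"
    and "b \<in> span (columns A)"
    and "\<And>i. c $ i > 0"
    and "\<And>i. c' $ i > 0"
  defines "\<phi> \<equiv> mp_pinv (A ** diag_mat c ** transpose A) *v b"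
  shows "1 / energy A (\<chi> i. 1 / c' $ i) b \<ge>
           1 / energy A (\<chi> i. 1 / c $ i) b
           + 1 / (energy A (\<chi> i. 1 / c $ i) b)\<^sup>2 *
             (\<Sum>i\<in>UNIV. c $ i * ((transpose A *v \<phi>) $ i)\<^sup>2 * (1 - c $ i / c' $ i))"
proof -
  define g where "g = transpose A *v \<phi>"
  define G where "G = (\<Sum>i\<in>UNIV. c $ i * (g $ i)\<^sup>2)"
  define H where "H = (\<Sum>i\<in>UNIV. 1 / c' $ i * ((diag_mat c *v g) $ i)\<^sup>2)"
  define E' where "E' = energy A (\<chi> i. 1 / c' $ i) b"
  have flow: "A *v (diag_mat c *v g) = b"
    unfolding g_def \<phi>_def using assms(3,2) by (rule potential_flow_weighted_gram_pinv)
  have E: "energy A (\<chi> i. 1 / c $ i) b = G"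
    using assms(3) flow unfolding G_def g_def by (rule energy_eq_potential_flow)
  have "E' \<le> H"
    using energy_le[of "\<chi> i. 1 / c' $ i" A "diag_mat c *v g" b] assms(4) flow
    by (simp add: E'_def H_def less_imp_le)
  moreover have "E' > 0" and "G > 0"
    using assms by (simp_all add: E'_def energy_pos flip: E)
  ultimately have "1 / G + 1 / G\<^sup>2 * (G - H) \<le> 1 / H" and "1 / H \<le> 1 / E'"
    by (intro inverse_ge_tangent_line frac_le; simp)+
  moreover have "(\<Sum>i\<in>UNIV. c $ i * (g $ i)\<^sup>2 * (1 - c $ i / c' $ i)) = G - H"
    using assms(4) by (simp add: G_def H_def diag_mat_mult_vector field_simps power2_eq_square
        less_imp_neq[symmetric] flip: sum_subtractf)
  ultimately show ?thesis unfolding E E'_def[symmetric] g_def[symmetric] by simp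
qed

end
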